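(* Let $p\ge 3$ be odd and let $\pi=\langle u,v\mid u^p=v^{2p+1}\rangle$ be the group of the $(p,2p+1)$ torus knot, with meridian $m=u^nv^{-k}$ and longitude $l=v^{2p+1}m^{-p(2p+1)}$, where $k,n\in\mathbb{Z}$ satisfy $-pk+(2p+1)n=1$. If $X,Y\in H[\pi]$ are the images of $m,l$, then $Y\in H^+[\pi][X^{\pm1}]$.
   Context: For a group $\pi$, the Brumfiel–Hilden algebra is $H[\pi]:=\mathbb{C}[\pi]/I$, where $I$ is the two-sided ideal of the group algebra generated by all elements $g(h+h^{-1})-(h+h^{-1})g$ with $g,h\in\pi$. $H^+[\pi]\subset H[\pi]$ is the subalgebra generated by the images of all $g+g^{-1}$, $g\in\pi$. For an element $X\in H[\pi]$ which is the image of a group element, $H^+[\pi][X^{\pm1}]$ denotes the subalgebra of $H[\pi]$ generated by $H^+[\pi]$, $X$ and $X^{-1}$. *)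

theory Defs
  imports Complex_Main "HOL-Algebra.Generated_Groups"
begin

text \<open>The group G is presented by generators u, v and the single relation
  u^p = v^q: it is generated by u, v, satisfies the relation, and has the universal
  property with respect to all groups (on the same element type).\<close>
definition torus_presentation :: "'a monoid \<Rightarrow> 'a \<Rightarrow> 'a \<Rightarrow> nat \<Rightarrow> nat \<Rightarrow> bool" where
  "torus_presentation G u v p q \<longleftrightarrow>
     group G \<and> u \<in> carrier G \<and> v \<in> carrier G \<and>
     u [^]\<^bsub>G\<^esub> p = v [^]\<^bsub>G\<^esub> q \<and>
     generate G {u, v} = carrier G \<and>
     (\<forall>(K::'a monoid) a b. group K \<and> a \<in> carrier K \<and> b \<in> carrier K \<and>
        a [^]\<^bsub>K\<^esub> p = b [^]\<^bsub>K\<^esub> q \<longrightarrow>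
        (\<exists>h \<in> hom G K. h u = a \<and> h v = b))"

definition ga_carrier :: "'a monoid \<Rightarrow> ('a \<Rightarrow> complex) set" where
  "ga_carrier G = {f. finite {x. f x \<noteq> 0} \<and> {x. f x \<noteq> 0} \<subseteq> carrier G}"

definition ga_delta :: "'a \<Rightarrow> 'a \<Rightarrow> complex" where
  "ga_delta g = (\<lambda>x. if x = g then 1 else 0)"

definition ga_add :: "('a \<Rightarrow> complex) \<Rightarrow> ('a \<Rightarrow> complex) \<Rightarrow> 'a \<Rightarrow> complex" where
  "ga_add f f' = (\<lambda>x. f x + f' x)"

definition ga_diff :: "('a \<Rightarrow> complex) \<Rightarrow> ('a \<Rightarrow> complex) \<Rightarrow> 'a \<Rightarrow> complex" where
  "ga_diff f f' = (\<lambda>x. f x - f' x)"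

definition ga_smult :: "complex \<Rightarrow> ('a \<Rightarrow> complex) \<Rightarrow> 'a \<Rightarrow> complex" where
  "ga_smult c f = (\<lambda>x. c * f x)"

definition ga_mult :: "'a monoid \<Rightarrow> ('a \<Rightarrow> complex) \<Rightarrow> ('a \<Rightarrow> complex) \<Rightarrow> 'a \<Rightarrow> complex" where
  "ga_mult G f f' = (\<lambda>x. if x \<in> carrier G
      then (\<Sum>y\<in>{y. f y \<noteq> 0}. f y * f' (inv\<^bsub>G\<^esub> y \<otimes>\<^bsub>G\<^esub> x)) else 0)"

inductive_set ga_subalg :: "'a monoid \<Rightarrow> ('a \<Rightarrow> complex) set \<Rightarrow> ('a \<Rightarrow> complex) set"
  for G S where
  gen: "s \<in> S \<Longrightarrow> s \<in> ga_subalg G S"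
| one: "ga_delta \<one>\<^bsub>G\<^esub> \<in> ga_subalg G S"
| add: "a \<in> ga_subalg G S \<Longrightarrow> b \<in> ga_subalg G S \<Longrightarrow> ga_add a b \<in> ga_subalg G S"
| smult: "a \<in> ga_subalg G S \<Longrightarrow> ga_smult c a \<in> ga_subalg G S"
| mult: "a \<in> ga_subalg G S \<Longrightarrow> b \<in> ga_subalg G S \<Longrightarrow> ga_mult G a b \<in> ga_subalg G S"

inductive_set ga_ideal :: "'a monoid \<Rightarrow> ('a \<Rightarrow> complex) set \<Rightarrow> ('a \<Rightarrow> complex) set"
  for G R where
  gen: "r \<in> R \<Longrightarrow> r \<in> ga_ideal G R"
| zero: "(\<lambda>x. 0) \<in> ga_ideal G R"
| add: "a \<in> ga_ideal G R \<Longrightarrow> b \<in> ga_ideal G R \<Longrightarrow> ga_add a b \<in> ga_ideal G R"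
| smult: "a \<in> ga_ideal G R \<Longrightarrow> ga_smult c a \<in> ga_ideal G R"
| lmult: "c \<in> ga_carrier G \<Longrightarrow> a \<in> ga_ideal G R \<Longrightarrow> ga_mult G c a \<in> ga_ideal G R"
| rmult: "c \<in> ga_carrier G \<Longrightarrow> a \<in> ga_ideal G R \<Longrightarrow> ga_mult G a c \<in> ga_ideal G R"

definition ga_sym :: "'a monoid \<Rightarrow> 'a \<Rightarrow> 'a \<Rightarrow> complex" where
  "ga_sym G h = ga_add (ga_delta h) (ga_delta (inv\<^bsub>G\<^esub> h))"

definition BH_ideal :: "'a monoid \<Rightarrow> ('a \<Rightarrow> complex) set" where
  "BH_ideal G = ga_ideal G
     {ga_diff (ga_mult G (ga_delta g) (ga_sym G h)) (ga_mult G (ga_sym G h) (ga_delta g)) | g h.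
        g \<in> carrier G \<and> h \<in> carrier G}"

text \<open>Preimage in C[G] of H^+[G]: subalgebra generated by all g + g^-1.\<close>
definition Hplus_pre :: "'a monoid \<Rightarrow> ('a \<Rightarrow> complex) set" where
  "Hplus_pre G = ga_subalg G {ga_sym G g | g. g \<in> carrier G}"

text \<open>The image of f in H[G] = C[G]/I lies in the subalgebra of H[G] generated by the
  images of the elements of T (T a subset of C[G]): some element z of the subalgebra of
  C[G] generated by T satisfies f - z \<in> I.\<close>
definition H_in_subalg :: "'a monoid \<Rightarrow> ('a \<Rightarrow> complex) \<Rightarrow> ('a \<Rightarrow> complex) set \<Rightarrow> bool" where
  "H_in_subalg G f T \<longleftrightarrow> (\<exists>z \<in> ga_subalg G T. ga_diff f z \<in> BH_ideal G)"

end

theory Submission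
  imports Defs
begin

text \<open>
  The elements of H^+ are central in H[\<pi>]. From v^2 = (v + v^-1) v - 1 one gets v^q = a v + b in
  \<complex>[\<pi>] with a, b in H^+. Since v^q = u^p is central in \<pi>, the product a v is central in H[\<pi>],
  so after multiplication by a the element v behaves like a central element of \<pi>, and
  a m^p = a u^(np) v^(-kp) = a v^(qn - pk) = a v. Hence l = v^q m^(-pq) = (a m^p + b) m^(-pq)
  in H[\<pi>], an element of H^+[X^(\<plusminus>1)]. The argument works for every torus knot group
  \<langle>u, v | u^p = v^q\<rangle>.
\<close>

lemma (in group) subgroup_commutant:
  assumes "z \<in> carrier G"
  shows "subgroup {g \<in> carrier G. g \<otimes> z = z \<otimes> g} G"
proof (rule subgroupI)
  fix g assume "g \<in> {g \<in> carrier G. g \<otimes> z = z \<otimes> g}"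
  then have g: "g \<in> carrier G" "g \<otimes> z = z \<otimes> g" by auto
  have "inv g \<otimes> z = inv g \<otimes> (z \<otimes> g) \<otimes> inv g" using g assms by (simp add: m_assoc)
  also have "\<dots> = inv g \<otimes> (g \<otimes> z) \<otimes> inv g" using g(2) by simp
  also have "\<dots> = z \<otimes> inv g" using g(1) assms by (simp add: m_assoc[symmetric])
  finally show "inv g \<in> {g \<in> carrier G. g \<otimes> z = z \<otimes> g}" using g by simp
next
  fix g h assume "g \<in> {g \<in> carrier G. g \<otimes> z = z \<otimes> g}" "h \<in> {g \<in> carrier G. g \<otimes> z = z \<otimes> g}"
  then show "g \<otimes> h \<in> {g \<in> carrier G. g \<otimes> z = z \<otimes> g}"
    using assms by (auto simp: m_assoc) (metis m_assoc)
qed (use assms in auto)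

lemma (in group) torus_relator_central:
  assumes u: "u \<in> carrier G" and v: "v \<in> carrier G"
    and uv: "u [^] (p::nat) = v [^] (q::nat)" and gen: "generate G {u, v} = carrier G"
    and g: "g \<in> carrier G"
  shows "g \<otimes> v [^] q = v [^] q \<otimes> g"
proof -
  have "u \<otimes> v [^] q = v [^] q \<otimes> u"
    using nat_pow_comm[OF u, of 1 p] u by (simp add: uv)
  moreover have "v \<otimes> v [^] q = v [^] q \<otimes> v"
    using nat_pow_comm[OF v, of 1 q] v by simp
  ultimately have "generate G {u, v} \<subseteq> {g \<in> carrier G. g \<otimes> v [^] q = v [^] q \<otimes> g}"
    using u v by (intro generate_subgroup_incl subgroup_commutant) auto
  then show ?thesis using gen g by blast
qed

lemma (in group) torus_meridian_pow_factors:
  fixes p q :: nat and k n :: int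
  assumes u: "u \<in> carrier G" and v: "v \<in> carrier G"
    and uv: "u [^] p = v [^] q" and kn: "- int p * k + int q * n = 1"
  shows "(u [^] n) [^] p \<otimes> (v [^] (- k)) [^] p = v"
proof -
  have "(u [^] n) [^] p = (u [^] int p) [^] n"
    using u by (simp add: int_pow_int[symmetric] int_pow_pow mult.commute)
  also have "\<dots> = v [^] (int q * n)"
    using v by (metis int_pow_int int_pow_pow uv)
  finally have "(u [^] n) [^] p = v [^] (int q * n)" .
  moreover have "(v [^] (- k)) [^] p = v [^] (- int p * k)"
    using v by (simp add: int_pow_int[symmetric] int_pow_pow mult.commute)
  ultimately show ?thesis
    using v kn by (simp add: int_pow_mult[symmetric] add.commute)
qed

lemma ga_carrierD:
  assumes "f \<in> ga_carrier G"
  shows "finite {x. f x \<noteq> 0}" and "{x. f x \<noteq> 0} \<subseteq> carrier G"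
  using assms unfolding ga_carrier_def by auto

lemma ga_carrier_vanishes: "f \<in> ga_carrier G \<Longrightarrow> x \<notin> carrier G \<Longrightarrow> f x = 0"
  unfolding ga_carrier_def by auto

lemma ga_delta_in_ga_carrier: "g \<in> carrier G \<Longrightarrow> ga_delta g \<in> ga_carrier G"
  unfolding ga_carrier_def ga_delta_def by auto

lemma ga_add_in_ga_carrier:
  assumes "f \<in> ga_carrier G" "f' \<in> ga_carrier G"
  shows "ga_add f f' \<in> ga_carrier G"
proof -
  have "{x. ga_add f f' x \<noteq> 0} \<subseteq> {x. f x \<noteq> 0} \<union> {x. f' x \<noteq> 0}"
    by (auto simp: ga_add_def)
  then show ?thesis
    using assms unfolding ga_carrier_def by (auto intro: finite_subset)
qed

lemma ga_smult_in_ga_carrier: "f \<in> ga_carrier G \<Longrightarrow> ga_smult c f \<in> ga_carrier G"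
  unfolding ga_carrier_def ga_smult_def by (auto intro: finite_subset[of _ "{x. f x \<noteq> 0}"])

lemma ga_diff_eq_add_smult: "ga_diff f f' = ga_add f (ga_smult (-1) f')"
  unfolding ga_diff_def ga_add_def ga_smult_def by auto

lemma ga_mult_add_right: "ga_mult G f (ga_add g h) = ga_add (ga_mult G f g) (ga_mult G f h)"
  unfolding ga_mult_def ga_add_def by (rule ext) (simp add: distrib_left sum.distrib)

lemma ga_mult_smult_right: "ga_mult G f (ga_smult c g) = ga_smult c (ga_mult G f g)"
  unfolding ga_mult_def ga_smult_def by (rule ext) (simp add: sum_distrib_left mult_ac)

lemma ga_mult_diff_right: "ga_mult G f (ga_diff g h) = ga_diff (ga_mult G f g) (ga_mult G f h)"
  unfolding ga_mult_def ga_diff_def by (rule ext) (simp add: right_diff_distrib sum_subtractf)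

lemma ga_mult_smult_left: "ga_mult G (ga_smult c f) h = ga_smult c (ga_mult G f h)"
proof (cases "c = 0")
  case True
  then show ?thesis unfolding ga_mult_def ga_smult_def by auto
next
  case False
  then have "{y. c * f y \<noteq> 0} = {y. f y \<noteq> 0}" by auto
  then show ?thesis unfolding ga_mult_def ga_smult_def
    by (auto simp: sum_distrib_left mult_ac)
qed

lemma ga_mult_eq_sum_superset:
  assumes "finite S" "{y. f y \<noteq> 0} \<subseteq> S"
  shows "ga_mult G f g x =
    (if x \<in> carrier G then (\<Sum>y\<in>S. f y * g (inv\<^bsub>G\<^esub> y \<otimes>\<^bsub>G\<^esub> x)) else 0)"
proof -
  have "(\<Sum>y\<in>{y. f y \<noteq> 0}. f y * g (inv\<^bsub>G\<^esub> y \<otimes>\<^bsub>G\<^esub> x))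
      = (\<Sum>y\<in>S. f y * g (inv\<^bsub>G\<^esub> y \<otimes>\<^bsub>G\<^esub> x))"
    by (rule sum.mono_neutral_left) (use assms in auto)
  then show ?thesis unfolding ga_mult_def by simp
qed

definition bh_cong :: "'a monoid \<Rightarrow> ('a \<Rightarrow> complex) \<Rightarrow> ('a \<Rightarrow> complex) \<Rightarrow> bool" where
  "bh_cong G f f' \<longleftrightarrow> ga_diff f f' \<in> BH_ideal G"

lemma H_in_subalg_iff_bh_cong: "H_in_subalg G f T \<longleftrightarrow> (\<exists>z\<in>ga_subalg G T. bh_cong G f z)"
  unfolding H_in_subalg_def bh_cong_def ..

lemma bh_cong_refl: "bh_cong G f f"
proof -
  have "ga_diff f f = (\<lambda>x. 0)" unfolding ga_diff_def by simp
  then show ?thesis unfolding bh_cong_def BH_ideal_def by (simp add: ga_ideal.zero)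
qed

lemma bh_cong_eq: "f = f' \<Longrightarrow> bh_cong G f f'"
  by (simp add: bh_cong_refl)

lemma bh_cong_sym:
  assumes "bh_cong G f f'"
  shows "bh_cong G f' f"
proof -
  have "ga_smult (-1) (ga_diff f f') \<in> BH_ideal G"
    using assms unfolding bh_cong_def BH_ideal_def by (rule ga_ideal.smult)
  moreover have "ga_smult (-1) (ga_diff f f') = ga_diff f' f"
    unfolding ga_smult_def ga_diff_def by auto
  ultimately show ?thesis unfolding bh_cong_def by simp
qed

lemma bh_cong_trans [trans]:
  assumes "bh_cong G f f'" "bh_cong G f' f''"
  shows "bh_cong G f f''"
proof -
  have "ga_add (ga_diff f f') (ga_diff f' f'') \<in> BH_ideal G"
    using assms unfolding bh_cong_def BH_ideal_def by (rule ga_ideal.add)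
  moreover have "ga_add (ga_diff f f') (ga_diff f' f'') = ga_diff f f''"
    unfolding ga_add_def ga_diff_def by auto
  ultimately show ?thesis unfolding bh_cong_def by simp
qed

lemma bh_cong_add:
  assumes "bh_cong G f g" "bh_cong G f' g'"
  shows "bh_cong G (ga_add f f') (ga_add g g')"
proof -
  have "ga_add (ga_diff f g) (ga_diff f' g') \<in> BH_ideal G"
    using assms unfolding bh_cong_def BH_ideal_def by (rule ga_ideal.add)
  moreover have "ga_add (ga_diff f g) (ga_diff f' g') = ga_diff (ga_add f f') (ga_add g g')"
    unfolding ga_add_def ga_diff_def by auto
  ultimately show ?thesis unfolding bh_cong_def by simp
qed

lemma bh_cong_smult:
  assumes "bh_cong G f g"
  shows "bh_cong G (ga_smult c f) (ga_smult c g)"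
proof -
  have "ga_smult c (ga_diff f g) \<in> BH_ideal G"
    using assms unfolding bh_cong_def BH_ideal_def by (rule ga_ideal.smult)
  moreover have "ga_smult c (ga_diff f g) = ga_diff (ga_smult c f) (ga_smult c g)"
    unfolding ga_smult_def ga_diff_def by (auto simp: right_diff_distrib)
  ultimately show ?thesis unfolding bh_cong_def by simp
qed

lemma bh_cong_mult_left:
  assumes "c \<in> ga_carrier G" "bh_cong G f g"
  shows "bh_cong G (ga_mult G c f) (ga_mult G c g)"
proof -
  have "ga_mult G c (ga_diff f g) \<in> BH_ideal G"
    using assms unfolding bh_cong_def BH_ideal_def by (rule ga_ideal.lmult)
  then show ?thesis unfolding bh_cong_def ga_mult_diff_right .
qed

lemma bh_cong_add_cancel:
  assumes "ga_add f g = ga_add f' g'" "bh_cong G g g'"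
  shows "bh_cong G f f'"
proof -
  have "ga_diff f f' = ga_diff g' g"
  proof
    fix x
    have "f x + g x = f' x + g' x" using fun_cong[OF assms(1), of x] by (simp add: ga_add_def)
    then show "ga_diff f f' x = ga_diff g' g x" unfolding ga_diff_def by (simp add: algebra_simps)
  qed
  then show ?thesis using bh_cong_sym[OF assms(2)] unfolding bh_cong_def by simp
qed

lemma bh_cong_sym_commute:
  assumes "g \<in> carrier G" "h \<in> carrier G"
  shows "bh_cong G (ga_mult G (ga_delta g) (ga_sym G h)) (ga_mult G (ga_sym G h) (ga_delta g))"
  unfolding bh_cong_def BH_ideal_def using assms by (blast intro: ga_ideal.gen)

text \<open>Since \<open>H\<^sup>+\<close> is central in \<open>H[G]\<close>, for \<open>a \<in> H\<^sup>+\<close> the relation \<open>scaled_cong G a\<close> is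
  compatible with multiplication on both sides.\<close>

definition scaled_cong :: "'a monoid \<Rightarrow> ('a \<Rightarrow> complex) \<Rightarrow> 'a \<Rightarrow> 'a \<Rightarrow> bool" where
  "scaled_cong G a g g' \<longleftrightarrow> bh_cong G (ga_mult G a (ga_delta g)) (ga_mult G a (ga_delta g'))"

definition scaled_centre :: "'a monoid \<Rightarrow> ('a \<Rightarrow> complex) \<Rightarrow> 'a set" where
  "scaled_centre G a = {y \<in> carrier G. \<forall>g\<in>carrier G. scaled_cong G a (g \<otimes>\<^bsub>G\<^esub> y) (y \<otimes>\<^bsub>G\<^esub> g)}"

lemma scaled_cong_eq: "g = g' \<Longrightarrow> scaled_cong G a g g'"
  unfolding scaled_cong_def by (simp add: bh_cong_refl)

lemma scaled_cong_sym: "scaled_cong G a g g' \<Longrightarrow> scaled_cong G a g' g"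
  unfolding scaled_cong_def by (rule bh_cong_sym)

lemma scaled_cong_trans [trans]:
  "scaled_cong G a g g' \<Longrightarrow> scaled_cong G a g' g'' \<Longrightarrow> scaled_cong G a g g''"
  unfolding scaled_cong_def by (rule bh_cong_trans)

text \<open>The constants of the group algebra expect a plain \<open>'a monoid\<close>, not a record scheme.\<close>

locale group_algebra = group G for G :: "'a monoid" (structure)

context group_algebra
begin

lemma ga_mult_support:
  assumes "f \<in> ga_carrier G"
  shows "{x. ga_mult G f g x \<noteq> 0} \<subseteq> (\<lambda>(y, w). y \<otimes> w) ` ({y. f y \<noteq> 0} \<times> {w. g w \<noteq> 0})"
proof
  fix x assume "x \<in> {x. ga_mult G f g x \<noteq> 0}"
  then have ne: "ga_mult G f g x \<noteq> 0" by simp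
  then have x: "x \<in> carrier G" by (cases "x \<in> carrier G") (simp_all add: ga_mult_def)
  then have s: "(\<Sum>y\<in>{y. f y \<noteq> 0}. f y * g (inv y \<otimes> x)) \<noteq> 0"
    using ne by (simp add: ga_mult_def)
  from sum.not_neutral_contains_not_neutral[OF s]
  obtain y where y: "f y \<noteq> 0" "g (inv y \<otimes> x) \<noteq> 0" by auto
  have "y \<in> carrier G" using assms y(1) ga_carrierD(2) by blast
  then have "y \<otimes> (inv y \<otimes> x) = x" using x by (simp add: m_assoc[symmetric])
  moreover have "(y, inv y \<otimes> x) \<in> {y. f y \<noteq> 0} \<times> {w. g w \<noteq> 0}" using y by simp
  ultimately show "x \<in> (\<lambda>(y, w). y \<otimes> w) ` ({y. f y \<noteq> 0} \<times> {w. g w \<noteq> 0})"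
    by force
qed

lemma ga_mult_in_ga_carrier:
  assumes "f \<in> ga_carrier G" "g \<in> ga_carrier G"
  shows "ga_mult G f g \<in> ga_carrier G"
proof -
  have "finite ((\<lambda>(y, w). y \<otimes> w) ` ({y. f y \<noteq> 0} \<times> {w. g w \<noteq> 0}))"
    using assms ga_carrierD(1) by blast
  then have "finite {x. ga_mult G f g x \<noteq> 0}"
    by (rule finite_subset[OF ga_mult_support[OF assms(1)]])
  moreover have "ga_mult G f g x = 0" if "x \<notin> carrier G" for x
    using that by (simp add: ga_mult_def)
  ultimately show ?thesis unfolding ga_carrier_def by blast
qed

lemma ga_sym_in_ga_carrier: "h \<in> carrier G \<Longrightarrow> ga_sym G h \<in> ga_carrier G"
  unfolding ga_sym_def by (simp add: ga_add_in_ga_carrier ga_delta_in_ga_carrier)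

lemma ga_mult_delta_left:
  assumes "g \<in> carrier G"
  shows "ga_mult G (ga_delta g) f = (\<lambda>x. if x \<in> carrier G then f (inv g \<otimes> x) else 0)"
proof -
  have "{y. ga_delta g y \<noteq> 0} = {g}" unfolding ga_delta_def by auto
  then show ?thesis unfolding ga_mult_def by (auto simp: ga_delta_def)
qed

lemma ga_mult_delta_delta:
  assumes "g \<in> carrier G" "h \<in> carrier G"
  shows "ga_mult G (ga_delta g) (ga_delta h) = ga_delta (g \<otimes> h)"
proof
  fix x
  show "ga_mult G (ga_delta g) (ga_delta h) x = ga_delta (g \<otimes> h) x"
  proof (cases "x \<in> carrier G")
    case True
    then have "inv g \<otimes> x = h \<longleftrightarrow> x = g \<otimes> h"
      using assms by (metis inv_solve_left)
    then show ?thesis using True assms by (simp add: ga_mult_delta_left) (simp add: ga_delta_def)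
  next
    case False
    then have "x \<noteq> g \<otimes> h" using assms by auto
    then show ?thesis using False assms by (simp add: ga_mult_delta_left) (simp add: ga_delta_def)
  qed
qed

lemma ga_mult_one_right:
  assumes "f \<in> ga_carrier G"
  shows "ga_mult G f (ga_delta \<one>) = f"
proof
  fix x
  show "ga_mult G f (ga_delta \<one>) x = f x"
  proof (cases "x \<in> carrier G")
    case True
    have "(\<Sum>y\<in>{y. f y \<noteq> 0}. f y * ga_delta \<one> (inv y \<otimes> x))
        = (\<Sum>y\<in>{y. f y \<noteq> 0}. if y = x then f y else 0)"
    proof (rule sum.cong[OF refl])
      fix y assume "y \<in> {y. f y \<noteq> 0}"
      then have "y \<in> carrier G" using assms ga_carrierD(2) by blast
      then have "inv y \<otimes> x = \<one> \<longleftrightarrow> y = x"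
        using True by (metis inv_closed inv_inv inv_equality r_inv)
      then show "f y * ga_delta \<one> (inv y \<otimes> x) = (if y = x then f y else 0)"
        by (simp add: ga_delta_def)
    qed
    also have "\<dots> = f x" using ga_carrierD(1)[OF assms] by (simp add: sum.delta)
    finally show ?thesis using True by (simp add: ga_mult_def)
  qed (simp add: ga_mult_def ga_carrier_vanishes[OF assms])
qed

lemma ga_mult_add_left:
  assumes "f \<in> ga_carrier G" "g \<in> ga_carrier G"
  shows "ga_mult G (ga_add f g) h = ga_add (ga_mult G f h) (ga_mult G g h)"
proof
  fix x
  let ?S = "{y. f y \<noteq> 0} \<union> {y. g y \<noteq> 0}"
  have S: "finite ?S" using assms ga_carrierD(1) by blast
  have "{y. ga_add f g y \<noteq> 0} \<subseteq> ?S" by (auto simp: ga_add_def)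
  note sum_eqs = ga_mult_eq_sum_superset[OF S this]
    ga_mult_eq_sum_superset[OF S Un_upper1] ga_mult_eq_sum_superset[OF S Un_upper2]
  show "ga_mult G (ga_add f g) h x = ga_add (ga_mult G f h) (ga_mult G g h) x"
    unfolding sum_eqs by (auto simp: ga_add_def distrib_right sum.distrib)
qed

lemma ga_mult_diff_left:
  assumes "f \<in> ga_carrier G" "g \<in> ga_carrier G"
  shows "ga_mult G (ga_diff f g) h = ga_diff (ga_mult G f h) (ga_mult G g h)"
  unfolding ga_diff_eq_add_smult ga_mult_add_left[OF assms(1) ga_smult_in_ga_carrier[OF assms(2)]]
    ga_mult_smult_left ..

lemma ga_mult_translate_sum:
  assumes g: "g \<in> ga_carrier G" and y: "y \<in> carrier G" and x: "x \<in> carrier G"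
    and T: "finite T" "(\<otimes>) y ` {w. g w \<noteq> 0} \<subseteq> T" "T \<subseteq> carrier G"
  shows "(\<Sum>t\<in>T. g (inv y \<otimes> t) * h (inv t \<otimes> x)) = ga_mult G g h (inv y \<otimes> x)"
proof -
  let ?Sg = "{w. g w \<noteq> 0}"
  have Sg: "?Sg \<subseteq> carrier G" using g ga_carrierD(2) by blast
  have "(\<Sum>t\<in>T. g (inv y \<otimes> t) * h (inv t \<otimes> x))
      = (\<Sum>t\<in>(\<otimes>) y ` ?Sg. g (inv y \<otimes> t) * h (inv t \<otimes> x))"
  proof (rule sum.mono_neutral_right[OF T(1,2)], rule ballI)
    fix t assume t: "t \<in> T - (\<otimes>) y ` ?Sg"
    then have "t = y \<otimes> (inv y \<otimes> t)" using T(3) y by (auto simp: m_assoc[symmetric])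
    with t have "inv y \<otimes> t \<notin> ?Sg" by (metis DiffD2 image_eqI)
    then show "g (inv y \<otimes> t) * h (inv t \<otimes> x) = 0" by simp
  qed
  also have "\<dots> = (\<Sum>w\<in>?Sg. g (inv y \<otimes> (y \<otimes> w)) * h (inv (y \<otimes> w) \<otimes> x))"
    by (rule sum.reindex[unfolded comp_def]) (rule inj_on_subset[OF inj_on_cmult[OF y] Sg])
  also have "\<dots> = (\<Sum>w\<in>?Sg. g w * h (inv w \<otimes> (inv y \<otimes> x)))"
    using Sg y x by (intro sum.cong) (auto simp: m_assoc[symmetric] inv_mult_group)
  also have "\<dots> = ga_mult G g h (inv y \<otimes> x)"
    using y x by (simp add: ga_mult_def)
  finally show ?thesis .
qed

lemma ga_mult_assoc:
  assumes f: "f \<in> ga_carrier G" and g: "g \<in> ga_carrier G"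
  shows "ga_mult G (ga_mult G f g) h = ga_mult G f (ga_mult G g h)"
proof
  fix x
  let ?Sf = "{y. f y \<noteq> 0}" and ?Sg = "{w. g w \<noteq> 0}"
  define T where "T = (\<lambda>(y, w). y \<otimes> w) ` (?Sf \<times> ?Sg)"
  have Sf: "finite ?Sf" "?Sf \<subseteq> carrier G" using f ga_carrierD by blast+
  have Sg: "finite ?Sg" "?Sg \<subseteq> carrier G" using g ga_carrierD by blast+
  have T: "finite T" "T \<subseteq> carrier G" unfolding T_def using Sf Sg by auto
  show "ga_mult G (ga_mult G f g) h x = ga_mult G f (ga_mult G g h) x"
  proof (cases "x \<in> carrier G")
    case x: True
    have "ga_mult G (ga_mult G f g) h x = (\<Sum>t\<in>T. ga_mult G f g t * h (inv t \<otimes> x))"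
      using ga_mult_eq_sum_superset[OF T(1) ga_mult_support[OF f, of g, folded T_def]] x by simp
    also have "\<dots> = (\<Sum>t\<in>T. \<Sum>y\<in>?Sf. f y * g (inv y \<otimes> t) * h (inv t \<otimes> x))"
      using T(2) by (intro sum.cong) (auto simp: ga_mult_def sum_distrib_right)
    also have "\<dots> = (\<Sum>y\<in>?Sf. f y * (\<Sum>t\<in>T. g (inv y \<otimes> t) * h (inv t \<otimes> x)))"
      by (subst sum.swap) (simp add: sum_distrib_left mult.assoc)
    also have "\<dots> = (\<Sum>y\<in>?Sf. f y * ga_mult G g h (inv y \<otimes> x))"
      using Sf(2) T x by (intro sum.cong refl arg_cong2[where f = "(*)"] ga_mult_translate_sum g)
        (auto simp: T_def)
    also have "\<dots> = ga_mult G f (ga_mult G g h) x"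
      using x by (simp add: ga_mult_def)
    finally show ?thesis .
  qed (simp add: ga_mult_def)
qed

lemma bh_cong_mult_right:
  assumes "c \<in> ga_carrier G" "f \<in> ga_carrier G" "g \<in> ga_carrier G" "bh_cong G f g"
  shows "bh_cong G (ga_mult G f c) (ga_mult G g c)"
proof -
  have "ga_mult G (ga_diff f g) c \<in> BH_ideal G"
    using assms unfolding bh_cong_def BH_ideal_def by (intro ga_ideal.rmult) auto
  then show ?thesis unfolding bh_cong_def ga_mult_diff_left[OF assms(2,3)] .
qed

lemma ga_subalg_subset_ga_carrier:
  assumes "S \<subseteq> ga_carrier G"
  shows "ga_subalg G S \<subseteq> ga_carrier G"
proof
  fix x assume "x \<in> ga_subalg G S"
  then show "x \<in> ga_carrier G"
    by (induction rule: ga_subalg.induct)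
      (use assms in \<open>auto intro: ga_delta_in_ga_carrier ga_add_in_ga_carrier
         ga_smult_in_ga_carrier ga_mult_in_ga_carrier\<close>)
qed

lemma ga_subalg_delta_pow:
  assumes "x \<in> carrier G" "ga_delta x \<in> ga_subalg G T"
  shows "ga_delta (x [^] (j::nat)) \<in> ga_subalg G T"
proof (induction j)
  case (Suc j)
  have "ga_delta (x [^] Suc j) = ga_mult G (ga_delta (x [^] j)) (ga_delta x)"
    using assms(1) by (simp add: ga_mult_delta_delta)
  then show ?case using Suc assms(2) by (simp add: ga_subalg.mult)
qed (simp add: ga_subalg.one)

lemma Hplus_pre_subset_ga_carrier: "Hplus_pre G \<subseteq> ga_carrier G"
  unfolding Hplus_pre_def
  by (rule ga_subalg_subset_ga_carrier) (auto intro: ga_sym_in_ga_carrier)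

lemma Hplus_pre_commute_mod_BH:
  assumes "x \<in> Hplus_pre G" "g \<in> carrier G"
  shows "bh_cong G (ga_mult G x (ga_delta g)) (ga_mult G (ga_delta g) x)"
proof -
  have dg: "ga_delta g \<in> ga_carrier G" using assms(2) by (rule ga_delta_in_ga_carrier)
  have "x \<in> ga_carrier G \<and> bh_cong G (ga_mult G x (ga_delta g)) (ga_mult G (ga_delta g) x)"
    using assms(1) unfolding Hplus_pre_def
  proof (induction rule: ga_subalg.induct)
    case (gen s)
    then obtain h where "h \<in> carrier G" "s = ga_sym G h" by blast
    then show ?case
      using bh_cong_sym[OF bh_cong_sym_commute[OF assms(2)]] ga_sym_in_ga_carrier by simp
  next
    case one
    show ?case using assms(2) by (simp add: ga_delta_in_ga_carrier ga_mult_delta_delta bh_cong_refl)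
  next
    case (add a b)
    then show ?case using dg
      by (simp add: ga_add_in_ga_carrier ga_mult_add_left ga_mult_add_right bh_cong_add)
  next
    case (smult a c)
    then show ?case
      by (simp add: ga_smult_in_ga_carrier ga_mult_smult_left ga_mult_smult_right bh_cong_smult)
  next
    case (mult a b)
    then have ab: "a \<in> ga_carrier G" "b \<in> ga_carrier G" by auto
    have "bh_cong G (ga_mult G (ga_mult G a b) (ga_delta g)) (ga_mult G a (ga_mult G b (ga_delta g)))"
      by (rule bh_cong_eq) (simp add: ga_mult_assoc ab)
    also have "bh_cong G \<dots> (ga_mult G a (ga_mult G (ga_delta g) b))"
      using mult ab by (intro bh_cong_mult_left) auto
    also have "bh_cong G \<dots> (ga_mult G (ga_mult G a (ga_delta g)) b)"
      by (rule bh_cong_eq) (simp add: ga_mult_assoc ab dg)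
    also have "bh_cong G \<dots> (ga_mult G (ga_mult G (ga_delta g) a) b)"
      using mult ab dg by (intro bh_cong_mult_right ga_mult_in_ga_carrier) auto
    also have "bh_cong G \<dots> (ga_mult G (ga_delta g) (ga_mult G a b))"
      by (rule bh_cong_eq) (simp add: ga_mult_assoc ab dg)
    finally show ?case using ab by (simp add: ga_mult_in_ga_carrier)
  qed
  then show ?thesis by simp
qed

lemma ga_delta_pow_Hplus_decomposition:
  assumes v: "v \<in> carrier G"
  shows "\<exists>a b. a \<in> Hplus_pre G \<and> b \<in> Hplus_pre G \<and>
           ga_delta (v [^] (j::nat)) = ga_add (ga_mult G a (ga_delta v)) b"
proof (induction j)
  case 0
  have "ga_delta (v [^] (0::nat)) = ga_add (ga_mult G (ga_smult 0 (ga_delta \<one>)) (ga_delta v)) (ga_delta \<one>)"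
    by (simp add: ga_mult_smult_left) (simp add: ga_add_def ga_smult_def)
  moreover have "ga_smult 0 (ga_delta \<one>) \<in> Hplus_pre G" "ga_delta \<one> \<in> Hplus_pre G"
    unfolding Hplus_pre_def by (auto intro: ga_subalg.smult ga_subalg.one)
  ultimately show ?case by blast
next
  case (Suc j)
  then obtain a b where ab: "a \<in> Hplus_pre G" "b \<in> Hplus_pre G"
    and vj: "ga_delta (v [^] j) = ga_add (ga_mult G a (ga_delta v)) b" by blast
  have ac: "a \<in> ga_carrier G" and bc: "b \<in> ga_carrier G"
    using ab Hplus_pre_subset_ga_carrier by auto
  have dv: "ga_delta v \<in> ga_carrier G" using v by (rule ga_delta_in_ga_carrier)
  define s where "s = ga_sym G v"
  have sc: "s \<in> ga_carrier G" unfolding s_def using v by (rule ga_sym_in_ga_carrier)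
  have sH: "s \<in> Hplus_pre G" unfolding s_def Hplus_pre_def using v by (blast intro: ga_subalg.gen)
  \<comment> \<open>\<open>v\<close> is a root of \<open>t\<^sup>2 - (v + v\<inverse>) t + 1\<close>\<close>
  have "ga_mult G s (ga_delta v) = ga_add (ga_delta (v \<otimes> v)) (ga_delta \<one>)"
    unfolding s_def ga_sym_def using v by (simp add: ga_mult_add_left ga_delta_in_ga_carrier ga_mult_delta_delta)
  then have vv: "ga_delta (v \<otimes> v) = ga_diff (ga_mult G s (ga_delta v)) (ga_delta \<one>)"
    unfolding ga_add_def ga_diff_def by (simp add: fun_eq_iff)
  have "ga_delta (v [^] Suc j) = ga_mult G (ga_delta (v [^] j)) (ga_delta v)"
    using v by (simp add: ga_mult_delta_delta)
  also have "\<dots> = ga_add (ga_mult G a (ga_delta (v \<otimes> v))) (ga_mult G b (ga_delta v))"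
    unfolding vj using ac bc dv v
    by (simp add: ga_mult_add_left ga_mult_in_ga_carrier ga_mult_assoc ga_mult_delta_delta)
  also have "\<dots> = ga_add (ga_diff (ga_mult G (ga_mult G a s) (ga_delta v)) a) (ga_mult G b (ga_delta v))"
    unfolding vv ga_mult_diff_right using ac sc dv by (simp add: ga_mult_assoc ga_mult_one_right)
  also have "\<dots> = ga_add (ga_mult G (ga_add (ga_mult G a s) b) (ga_delta v)) (ga_smult (-1) a)"
    unfolding ga_mult_add_left[OF ga_mult_in_ga_carrier[OF ac sc] bc]
    by (auto simp: ga_add_def ga_diff_def ga_smult_def)
  finally have "ga_delta (v [^] Suc j)
      = ga_add (ga_mult G (ga_add (ga_mult G a s) b) (ga_delta v)) (ga_smult (-1) a)" .
  moreover have "ga_add (ga_mult G a s) b \<in> Hplus_pre G" "ga_smult (-1) a \<in> Hplus_pre G"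
    using ab sH unfolding Hplus_pre_def
    by (simp_all add: ga_subalg.add ga_subalg.mult ga_subalg.smult)
  ultimately show ?case by blast
qed

lemma ga_mult_delta_mult:
  assumes "a \<in> ga_carrier G" "g \<in> carrier G" "h \<in> carrier G"
  shows "ga_mult G a (ga_delta (g \<otimes> h)) = ga_mult G (ga_mult G a (ga_delta g)) (ga_delta h)"
  using assms by (simp add: ga_mult_assoc ga_delta_in_ga_carrier ga_mult_delta_delta)

context
  fixes a assumes a: "a \<in> Hplus_pre G"
begin

lemma Hplus_in_ga_carrier: "a \<in> ga_carrier G"
  using a Hplus_pre_subset_ga_carrier by blast

lemma scaled_cong_mult_right:
  assumes "g \<in> carrier G" "g' \<in> carrier G" "c \<in> carrier G" "scaled_cong G a g g'"
  shows "scaled_cong G a (g \<otimes> c) (g' \<otimes> c)"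
  using assms Hplus_in_ga_carrier unfolding scaled_cong_def
  by (simp add: ga_mult_delta_mult bh_cong_mult_right ga_mult_in_ga_carrier ga_delta_in_ga_carrier)

lemma scaled_cong_mult_left:
  assumes g: "g \<in> carrier G" "g' \<in> carrier G" and c: "c \<in> carrier G"
    and gg': "scaled_cong G a g g'"
  shows "scaled_cong G a (c \<otimes> g) (c \<otimes> g')"
proof -
  have ac: "a \<in> ga_carrier G" by (rule Hplus_in_ga_carrier)
  have dc: "ga_delta c \<in> ga_carrier G" "ga_delta g \<in> ga_carrier G" "ga_delta g' \<in> ga_carrier G"
    using g c by (auto intro: ga_delta_in_ga_carrier)
  have swap: "bh_cong G (ga_mult G (ga_mult G a (ga_delta c)) (ga_delta h))
                        (ga_mult G (ga_delta c) (ga_mult G a (ga_delta h)))" if "h \<in> carrier G" for h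
  proof -
    have "bh_cong G (ga_mult G (ga_mult G a (ga_delta c)) (ga_delta h))
                    (ga_mult G (ga_mult G (ga_delta c) a) (ga_delta h))"
      using Hplus_pre_commute_mod_BH[OF a c] ac dc that
      by (intro bh_cong_mult_right) (auto intro: ga_mult_in_ga_carrier ga_delta_in_ga_carrier)
    then show ?thesis using ac dc by (simp add: ga_mult_assoc)
  qed
  have "bh_cong G (ga_mult G a (ga_delta (c \<otimes> g))) (ga_mult G (ga_delta c) (ga_mult G a (ga_delta g)))"
    using swap[OF g(1)] ac g c by (simp add: ga_mult_delta_mult)
  also have "bh_cong G \<dots> (ga_mult G (ga_delta c) (ga_mult G a (ga_delta g')))"
    using gg' unfolding scaled_cong_def by (rule bh_cong_mult_left[OF dc(1)])
  also have "bh_cong G \<dots> (ga_mult G a (ga_delta (c \<otimes> g')))"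
    using bh_cong_sym[OF swap[OF g(2)]] ac g c by (simp add: ga_mult_delta_mult)
  finally show ?thesis unfolding scaled_cong_def .
qed

lemma subgroup_scaled_centre: "subgroup (scaled_centre G a) G"
proof (rule subgroupI)
  show "scaled_centre G a \<subseteq> carrier G" "scaled_centre G a \<noteq> {}"
    unfolding scaled_centre_def by (auto intro!: scaled_cong_eq)
next
  fix y assume y: "y \<in> scaled_centre G a"
  show "inv y \<in> scaled_centre G a"
    unfolding scaled_centre_def
  proof (intro CollectI conjI ballI)
    fix g assume g: "g \<in> carrier G"
    have yc: "y \<in> carrier G" using y unfolding scaled_centre_def by blast
    define x where "x = inv y \<otimes> g \<otimes> inv y"
    have "x \<in> carrier G" unfolding x_def using g yc by simp
    then have "scaled_cong G a (x \<otimes> y) (y \<otimes> x)" using y unfolding scaled_centre_def by blast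
    moreover have "x \<otimes> y = inv y \<otimes> g" unfolding x_def using g yc by (simp add: m_assoc)
    moreover have "y \<otimes> x = g \<otimes> inv y" unfolding x_def using g yc by (simp add: m_assoc[symmetric])
    ultimately show "scaled_cong G a (g \<otimes> inv y) (inv y \<otimes> g)" by (simp add: scaled_cong_sym)
  qed (use y in \<open>simp add: scaled_centre_def\<close>)
next
  fix y y' assume y: "y \<in> scaled_centre G a" and y': "y' \<in> scaled_centre G a"
  then have yc: "y \<in> carrier G" "y' \<in> carrier G" unfolding scaled_centre_def by auto
  show "y \<otimes> y' \<in> scaled_centre G a"
    unfolding scaled_centre_def
  proof (intro CollectI conjI ballI)
    fix g assume g: "g \<in> carrier G"
    have "scaled_cong G a (g \<otimes> (y \<otimes> y')) ((g \<otimes> y) \<otimes> y')"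
      using g yc by (simp add: m_assoc scaled_cong_eq)
    also have "scaled_cong G a \<dots> ((y \<otimes> g) \<otimes> y')"
      using y g yc unfolding scaled_centre_def by (intro scaled_cong_mult_right) auto
    also have "scaled_cong G a \<dots> (y \<otimes> (g \<otimes> y'))"
      using g yc by (simp add: m_assoc scaled_cong_eq)
    also have "scaled_cong G a \<dots> (y \<otimes> (y' \<otimes> g))"
      using y' g yc unfolding scaled_centre_def by (intro scaled_cong_mult_left) auto
    also have "scaled_cong G a \<dots> ((y \<otimes> y') \<otimes> g)"
      using g yc by (simp add: m_assoc scaled_cong_eq)
    finally show "scaled_cong G a (g \<otimes> (y \<otimes> y')) ((y \<otimes> y') \<otimes> g)" .
  qed (use yc in simp)
qed

lemma scaled_cong_pow_mult_distrib:
  assumes x: "x \<in> carrier G" and y: "y \<in> scaled_centre G a"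
  shows "scaled_cong G a ((x \<otimes> y) [^] (n::nat)) (x [^] n \<otimes> y [^] n)"
proof (induction n)
  case 0
  show ?case by (simp add: scaled_cong_eq)
next
  case (Suc n)
  have yc: "y \<in> carrier G" using y unfolding scaled_centre_def by blast
  have yn: "y [^] n \<in> scaled_centre G a"
    using subgroup_int_pow_closed[OF subgroup_scaled_centre y, of "int n"] by (simp add: int_pow_int)
  have "scaled_cong G a ((x \<otimes> y) [^] Suc n) ((x [^] n \<otimes> y [^] n) \<otimes> (x \<otimes> y))"
    using Suc x yc by (simp add: scaled_cong_mult_right)
  also have "scaled_cong G a \<dots> (x [^] n \<otimes> (y [^] n \<otimes> x) \<otimes> y)"
    using x yc by (simp add: m_assoc scaled_cong_eq)
  also have "scaled_cong G a \<dots> (x [^] n \<otimes> (x \<otimes> y [^] n) \<otimes> y)"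
  proof -
    have "scaled_cong G a (y [^] n \<otimes> x) (x \<otimes> y [^] n)"
      using yn x unfolding scaled_centre_def by (blast intro: scaled_cong_sym)
    then show ?thesis using x yc by (simp add: scaled_cong_mult_left scaled_cong_mult_right)
  qed
  also have "scaled_cong G a \<dots> (x [^] Suc n \<otimes> y [^] Suc n)"
    using x yc by (simp add: m_assoc scaled_cong_eq)
  finally show ?case .
qed

lemma scaled_centre_of_decomposition:
  assumes b: "b \<in> Hplus_pre G" and v: "v \<in> carrier G"
    and z: "z \<in> carrier G" "\<And>g. g \<in> carrier G \<Longrightarrow> g \<otimes> z = z \<otimes> g"
    and dec: "ga_delta z = ga_add (ga_mult G a (ga_delta v)) b"
  shows "v \<in> scaled_centre G a"
  unfolding scaled_centre_def
proof (intro CollectI conjI ballI)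
  fix g assume g: "g \<in> carrier G"
  define w where "w = ga_mult G a (ga_delta v)"
  have ac: "a \<in> ga_carrier G" by (rule Hplus_in_ga_carrier)
  have bc: "b \<in> ga_carrier G" using b Hplus_pre_subset_ga_carrier by blast
  have dg: "ga_delta g \<in> ga_carrier G" and dv: "ga_delta v \<in> ga_carrier G"
    using g v by (auto intro: ga_delta_in_ga_carrier)
  have wc: "w \<in> ga_carrier G" unfolding w_def using ac dv by (rule ga_mult_in_ga_carrier)
  \<comment> \<open>\<open>a v = z - b\<close> commutes with \<open>g\<close> modulo \<open>I\<close>, as \<open>z\<close> is central and \<open>b \<in> H\<^sup>+\<close>\<close>
  have w_commute: "bh_cong G (ga_mult G (ga_delta g) w) (ga_mult G w (ga_delta g))"
  proof (rule bh_cong_add_cancel)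
    have "ga_add (ga_mult G (ga_delta g) w) (ga_mult G (ga_delta g) b)
        = ga_mult G (ga_delta g) (ga_delta z)"
      unfolding dec w_def ga_mult_add_right ..
    also have "\<dots> = ga_mult G (ga_delta z) (ga_delta g)"
      using g z(1) by (simp add: ga_mult_delta_delta z(2)[OF g])
    also have "\<dots> = ga_add (ga_mult G w (ga_delta g)) (ga_mult G b (ga_delta g))"
      unfolding dec w_def[symmetric] by (rule ga_mult_add_left[OF wc bc])
    finally show "ga_add (ga_mult G (ga_delta g) w) (ga_mult G (ga_delta g) b)
        = ga_add (ga_mult G w (ga_delta g)) (ga_mult G b (ga_delta g))" .
    show "bh_cong G (ga_mult G (ga_delta g) b) (ga_mult G b (ga_delta g))"
      by (rule bh_cong_sym[OF Hplus_pre_commute_mod_BH[OF b g]])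
  qed
  have "bh_cong G (ga_mult G a (ga_delta (g \<otimes> v))) (ga_mult G (ga_mult G (ga_delta g) a) (ga_delta v))"
    using Hplus_pre_commute_mod_BH[OF a g] ac dg dv g v
    by (simp add: ga_mult_delta_mult bh_cong_mult_right ga_mult_in_ga_carrier)
  also have "bh_cong G \<dots> (ga_mult G w (ga_delta g))"
    using w_commute ac dg dv by (simp add: ga_mult_assoc w_def)
  also have "bh_cong G \<dots> (ga_mult G a (ga_delta (v \<otimes> g)))"
    using ac g v by (simp add: w_def ga_mult_delta_mult bh_cong_refl)
  finally show "scaled_cong G a (g \<otimes> v) (v \<otimes> g)" unfolding scaled_cong_def .
qed (use v in simp)

lemma torus_meridian_pow_scaled_cong:
  fixes p q :: nat and k n :: int
  assumes b: "b \<in> Hplus_pre G" and u: "u \<in> carrier G" and v: "v \<in> carrier G"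
    and uv: "u [^] p = v [^] q"
    and central: "\<And>g. g \<in> carrier G \<Longrightarrow> g \<otimes> v [^] q = v [^] q \<otimes> g"
    and kn: "- int p * k + int q * n = 1"
    and dec: "ga_delta (v [^] q) = ga_add (ga_mult G a (ga_delta v)) b"
  shows "scaled_cong G a ((u [^] n \<otimes> v [^] (- k)) [^] p) v"
proof -
  have "v \<in> scaled_centre G a"
    using scaled_centre_of_decomposition[OF b v _ central dec] v by simp
  then have "v [^] (- k) \<in> scaled_centre G a"
    by (rule subgroup_int_pow_closed[OF subgroup_scaled_centre])
  then have "scaled_cong G a ((u [^] n \<otimes> v [^] (- k)) [^] p) ((u [^] n) [^] p \<otimes> (v [^] (- k)) [^] p)"
    using u by (intro scaled_cong_pow_mult_distrib) auto
  then show ?thesis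
    using torus_meridian_pow_factors[OF u v uv kn] by simp
qed

end

lemma torus_longitude_H_in_subalg:
  fixes p q :: nat and k n :: int
  assumes u: "u \<in> carrier G" and v: "v \<in> carrier G"
    and uv: "u [^] p = v [^] q"
    and central: "\<And>g. g \<in> carrier G \<Longrightarrow> g \<otimes> v [^] q = v [^] q \<otimes> g"
    and kn: "- int p * k + int q * n = 1"
  defines "m \<equiv> u [^] n \<otimes> v [^] (- k)"
  shows "H_in_subalg G (ga_delta (v [^] q \<otimes> m [^] (- (int p * int q))))
           (Hplus_pre G \<union> {ga_delta m, ga_delta (inv m)})"
proof -
  define T where "T = Hplus_pre G \<union> {ga_delta m, ga_delta (inv m)}"
  have mc: "m \<in> carrier G" unfolding m_def using u v by simp
  obtain a b where a: "a \<in> Hplus_pre G" and b: "b \<in> Hplus_pre G"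
    and dec: "ga_delta (v [^] q) = ga_add (ga_mult G a (ga_delta v)) b"
    using ga_delta_pow_Hplus_decomposition[OF v] by blast
  have mp: "scaled_cong G a (m [^] p) v"
    unfolding m_def by (rule torus_meridian_pow_scaled_cong[OF a b u v uv central kn dec])
  define E where "E = ga_add (ga_mult G a (ga_delta (m [^] p))) b"
  define r where "r = inv m [^] (p * q)"
  have rc: "r \<in> carrier G" unfolding r_def using mc by simp
  have ac: "a \<in> ga_carrier G" and bc: "b \<in> ga_carrier G"
    using a b Hplus_pre_subset_ga_carrier by auto
  have Ec: "E \<in> ga_carrier G"
    unfolding E_def using ac bc mc
    by (intro ga_add_in_ga_carrier ga_mult_in_ga_carrier ga_delta_in_ga_carrier) auto
  have "bh_cong G (ga_delta (v [^] q)) E"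
    unfolding dec E_def using mp unfolding scaled_cong_def
    by (intro bh_cong_add bh_cong_refl) (rule bh_cong_sym)
  then have "bh_cong G (ga_mult G (ga_delta (v [^] q)) (ga_delta r)) (ga_mult G E (ga_delta r))"
    using Ec rc v by (intro bh_cong_mult_right ga_delta_in_ga_carrier) auto
  then have "bh_cong G (ga_delta (v [^] q \<otimes> r)) (ga_mult G E (ga_delta r))"
    using rc v by (simp add: ga_mult_delta_delta)
  moreover have "m [^] (- (int p * int q)) = r"
    unfolding r_def using mc by (simp add: int_pow_neg_int nat_pow_inv flip: of_nat_mult)
  moreover have "ga_mult G E (ga_delta r) \<in> ga_subalg G T"
  proof -
    have "ga_delta m \<in> ga_subalg G T" "ga_delta (inv m) \<in> ga_subalg G T"
      and "a \<in> ga_subalg G T" "b \<in> ga_subalg G T"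
      unfolding T_def using a b by (auto intro: ga_subalg.gen)
    then show ?thesis
      unfolding E_def r_def using mc
      by (simp add: ga_subalg.add ga_subalg.mult ga_subalg_delta_pow)
  qed
  ultimately show ?thesis
    unfolding H_in_subalg_iff_bh_cong T_def by auto
qed

end

theorem mainTheorem3:
  fixes G :: "'a monoid" and u v :: 'a and p :: nat and k n :: int
  assumes "p \<ge> 3" and "odd p"
    and pres: "torus_presentation G u v p (2 * p + 1)"
    and kn: "- int p * k + (2 * int p + 1) * n = 1"
  defines "m \<equiv> u [^]\<^bsub>G\<^esub> n \<otimes>\<^bsub>G\<^esub> v [^]\<^bsub>G\<^esub> (- k)"
    and "l \<equiv> v [^]\<^bsub>G\<^esub> (2 * p + 1) \<otimes>\<^bsub>G\<^esub> (u [^]\<^bsub>G\<^esub> n \<otimes>\<^bsub>G\<^esub> v [^]\<^bsub>G\<^esub> (- k)) [^]\<^bsub>G\<^esub> (- (int p * (2 * int p + 1)))"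
  shows "H_in_subalg G (ga_delta l)
           (Hplus_pre G \<union> {ga_delta m, ga_delta (inv\<^bsub>G\<^esub> m)})"
proof -
  have grp: "group G" and u: "u \<in> carrier G" and v: "v \<in> carrier G"
    and uv: "u [^]\<^bsub>G\<^esub> p = v [^]\<^bsub>G\<^esub> (2 * p + 1)"
    and gen: "generate G {u, v} = carrier G"
    using pres unfolding torus_presentation_def by auto
  interpret group_algebra G using grp unfolding group_algebra_def .
  have q: "int (2 * p + 1) = 2 * int p + 1" by simp
  show ?thesis
    using torus_longitude_H_in_subalg[OF u v uv torus_relator_central[OF u v uv gen]] kn
    unfolding l_def m_def q by simp
qed

end
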